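(* Let $\mathfrak E$ be a tree structure ensemble and $\mathbb V=\mathcal F(\mathfrak E)$. Suppose $f^*\in\mathbb V$, where $f^*(\mathbf x)=f_1(x_1)+f_2(x_2)+\cdots+f_{m'}(x_{m'})$ for some univariate functions $f_1,\dots,f_{m'}$ on $\{1,\dots,B\}$. Then for any feature $1\le i\le m'$ and any knot $t$ of $f_i$, i.e. any value $t$ with $f_i(t)\ne f_i(t+1)$, $\mathbb V$ has full coverage of the split $(i,t)$.
   Context: $\mathcal X=\{1,\dots,B\}^d$. A tree structure is a finite rooted binary tree with axis-aligned splitting rules at internal nodes whose leaves partition $\mathcal X$ into rectangular cells; a tree structure ensemble is a tuple of tree structures, and $\mathcal F(\mathfrak E)$ is the linear span of the indicator functions of all leaves of all its trees (functions on $\mathcal X$). For a coordinate index $i$, write points of $\mathcal X$ as $(\mathbf x^{-i},x_i)$ with $\mathbf x^{-i}\in\{1,\dots,B\}^{d-1}$ the other coordinates, and let $\mathbf e_i$ be the $i$-th coordinate vector. A point $\mathbf x$ is a jump location for $f$ with respect to feature $i$ if $f(\mathbf x)\ne f(\mathbf x+\mathbf e_i)$. For a set $\mathbb V$ of functions, $\mathrm{coverage}(i,t;\mathbb V)=\{\mathbf x^{-i}\in\{1,\dots,B\}^{d-1}: \exists f\in\mathbb V$ such that $(\mathbf x^{-i},t)$ is a jump location for $f$ with respect to feature $i\}$, and $\mathbb V$ has full coverage of the split $(i,t)$ if $\mathrm{coverage}(i,t;\mathbb V)=\{1,\dots,B\}^{d-1}$. *)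

theory Defs
  imports Complex_Main
begin

text \<open>Points of X = {1..B}^d are functions nat => nat whose coordinates 1..d lie in
  {1..B} and whose other coordinates are 0 (extensional representation).\<close>

definition grid :: "nat \<Rightarrow> nat \<Rightarrow> (nat \<Rightarrow> nat) set" where
  "grid B d = {x. \<forall>j. (1 \<le> j \<and> j \<le> d \<longrightarrow> 1 \<le> x j \<and> x j \<le> B) \<and>
                        (\<not> (1 \<le> j \<and> j \<le> d) \<longrightarrow> x j = 0)}"

text \<open>Points x^{-i} of {1..B}^{d-1}: coordinate i (and coordinates outside 1..d) set to 0.
  The point (x^{-i}, t) is y(i := t).\<close>

definition grid_minus :: "nat \<Rightarrow> nat \<Rightarrow> nat \<Rightarrow> (nat \<Rightarrow> nat) set" where
  "grid_minus B d i = {y. \<forall>j. (1 \<le> j \<and> j \<le> d \<and> j \<noteq> i \<longrightarrow> 1 \<le> y j \<and> y j \<le> B) \<and>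
                        (\<not> (1 \<le> j \<and> j \<le> d \<and> j \<noteq> i) \<longrightarrow> y j = 0)}"

text \<open>Tree structures: binary trees with axis-aligned splitting rules
  (Node j s l r sends x to l if x j \<le> s, otherwise to r).\<close>

datatype tree = Leaf | Node nat nat tree tree

fun cells :: "tree \<Rightarrow> (nat \<Rightarrow> nat) set set" where
  "cells Leaf = {UNIV}"
| "cells (Node j s l r) =
     (\<lambda>C. {x. x j \<le> s} \<inter> C) ` cells l \<union> (\<lambda>C. {x. s < x j} \<inter> C) ` cells r"

type_synonym ensemble = "tree list"

text \<open>F(E): linear span of the leaf indicators of all trees, as functions on X
  (membership only depends on the values on X).\<close>

definition Fspan :: "nat \<Rightarrow> nat \<Rightarrow> ensemble \<Rightarrow> ((nat \<Rightarrow> nat) \<Rightarrow> real) set" where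
  "Fspan B d E = {f. \<exists>c :: nat \<Rightarrow> (nat \<Rightarrow> nat) set \<Rightarrow> real.
      \<forall>x \<in> grid B d. f x = (\<Sum>k<length E. \<Sum>C\<in>cells (E ! k). c k C * (if x \<in> C then 1 else 0))}"

definition jump_location ::
  "nat \<Rightarrow> nat \<Rightarrow> ((nat \<Rightarrow> nat) \<Rightarrow> real) \<Rightarrow> nat \<Rightarrow> (nat \<Rightarrow> nat) \<Rightarrow> bool" where
  "jump_location B d f i x \<longleftrightarrow>
     x \<in> grid B d \<and> x(i := x i + 1) \<in> grid B d \<and> f x \<noteq> f (x(i := x i + 1))"

definition coverage ::
  "nat \<Rightarrow> nat \<Rightarrow> nat \<Rightarrow> nat \<Rightarrow> ((nat \<Rightarrow> nat) \<Rightarrow> real) set \<Rightarrow> (nat \<Rightarrow> nat) set" where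
  "coverage B d i t V = {y \<in> grid_minus B d i. \<exists>f \<in> V. jump_location B d f i (y(i := t))}"

definition full_coverage ::
  "nat \<Rightarrow> nat \<Rightarrow> nat \<Rightarrow> nat \<Rightarrow> ((nat \<Rightarrow> nat) \<Rightarrow> real) set \<Rightarrow> bool" where
  "full_coverage B d i t V \<longleftrightarrow> coverage B d i t V = grid_minus B d i"

end

theory Submission
  imports Defs
begin

text \<open>The additive function \<open>f\<^sup>*\<close> is itself a member of \<open>\<V>\<close>, and moving
  coordinate \<open>i\<close> from \<open>t\<close> to \<open>t + 1\<close> changes only its summand \<open>f\<^sub>i\<close>; so \<open>f\<^sup>*\<close> has a
  jump at \<open>(x\<^sup>-\<^sup>i, t)\<close> for every \<open>x\<^sup>-\<^sup>i\<close>, whatever the tree structures are.\<close>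

lemma full_coverage_iff:
  "full_coverage B d i t V \<longleftrightarrow>
     (\<forall>y \<in> grid_minus B d i. \<exists>f \<in> V. jump_location B d f i (y(i := t)))"
  unfolding full_coverage_def coverage_def by blast

lemma fun_upd_in_grid:
  assumes "y \<in> grid_minus B d i" and "1 \<le> i" "i \<le> d" and "1 \<le> s" "s \<le> B"
  shows "y(i := s) \<in> grid B d"
  using assms unfolding grid_minus_def grid_def by auto

lemma sum_fun_upd_remove:
  assumes "finite A" and "i \<in> A"
  shows "(\<Sum>j\<in>A. g j ((y(i := s)) j)) = g i s + (\<Sum>j\<in>A - {i}. g j (y j))"
proof -
  have "(\<Sum>j\<in>A - {i}. g j ((y(i := s)) j)) = (\<Sum>j\<in>A - {i}. g j (y j))"
    by (rule sum.cong) auto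
  then show ?thesis
    using sum.remove[OF assms, of "\<lambda>j. g j ((y(i := s)) j)"] by simp
qed

lemma jump_location_additive:
  assumes "finite A" and "i \<in> A" and "1 \<le> i" "i \<le> d"
    and "y \<in> grid_minus B d i" and "1 \<le> t" "t + 1 \<le> B"
    and "g i t \<noteq> g i (t + 1)"
  shows "jump_location B d (\<lambda>x. \<Sum>j\<in>A. g j (x j)) i (y(i := t))"
proof -
  have "y(i := t) \<in> grid B d" and "y(i := t + 1) \<in> grid B d"
    using assms by (auto intro: fun_upd_in_grid)
  moreover have "(\<Sum>j\<in>A. g j ((y(i := t)) j)) \<noteq> (\<Sum>j\<in>A. g j ((y(i := t + 1)) j))"
    using assms by (simp only: sum_fun_upd_remove)
  ultimately show ?thesis
    unfolding jump_location_def by simp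
qed

theorem lemmaF4:
  fixes B d m :: nat and E :: ensemble and fs :: "nat \<Rightarrow> nat \<Rightarrow> real"
    and i t :: nat
  assumes "m \<le> d"
    and "(\<lambda>x. \<Sum>j = 1..m. fs j (x j)) \<in> Fspan B d E"
    and "1 \<le> i" and "i \<le> m"
    and "1 \<le> t" and "t + 1 \<le> B"
    and "fs i t \<noteq> fs i (t + 1)"
  shows "full_coverage B d i t (Fspan B d E)"
proof -
  have "jump_location B d (\<lambda>x. \<Sum>j = 1..m. fs j (x j)) i (y(i := t))"
    if "y \<in> grid_minus B d i" for y
    using assms that by (intro jump_location_additive) auto
  then show ?thesis
    unfolding full_coverage_iff using assms(2) by blast
qed

end
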